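(* Let $R=\bigoplus_{s\in S}R_s$ be an epsilon-strongly graded $S$-graded ring inducing $S$. Then $R$ is graded von Neumann regular if and only if $R_e$ is a von Neumann regular ring for every idempotent $e\in S$.
   Context: Rings are associative, not necessarily unital. $S$-graded ring inducing $S$: $S$ a partial groupoid, $R=\bigoplus_{s\in S}R_s$, $R_sR_t\subseteq R_{st}$ when $st$ defined, $R_sR_t\ne0$ implies $st$ defined. Convention: $0\in S$, $R_0=0$, $S\setminus\{0\}=\{s:R_s\ne0\}$, undefined products set to $0$, $0$ absorbing. $H_R=\bigcup_sR_s$. $S$ cancellative: $0\ne su=tu$ or $0\ne us=ut$ implies $s=t$. (LRI): for every $s\in S$ there exist $s^{-1}\in S$ and idempotents $e,f$ with $es=sf=s$, $fs^{-1}=s^{-1}e=s^{-1}$, $ss^{-1}=e$, $s^{-1}s=f$. $R_sR_t$ denotes the additive subgroup generated by products. $R$ is epsilon-strongly graded if $S$ is cancellative, satisfies (LRI), and for every $s\in S$ there exists $\epsilon(s)\in R_sR_{s^{-1}}$ such that $\epsilon(s)x=x=x\epsilon(s^{-1})$ for every $x\in R_s$. $R$ is graded von Neumann regular if $x\in xRx$ for all $x\in H_R$. *)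

theory Defs
  imports Main
begin

text \<open>The ring R is the whole type 'a (class ring: associative, not
necessarily unital). The partial groupoid S is the type 's together with a
total multiplication mul in which undefined products are sent to the distinguished
absorbing element z (the "0" of S).\<close>

definition add_span :: "'a::ab_group_add set \<Rightarrow> 'a set" where
  "add_span X = \<Inter>{G. X \<subseteq> G \<and> 0 \<in> G \<and> (\<forall>a\<in>G. \<forall>b\<in>G. a + b \<in> G) \<and> (\<forall>a\<in>G. - a \<in> G)}"

definition setprod :: "'a::ring set \<Rightarrow> 'a set \<Rightarrow> 'a set" where
  "setprod A B = add_span {a * b | a b. a \<in> A \<and> b \<in> B}"

definition additive_subgroup :: "'a::ab_group_add set \<Rightarrow> bool" where
  "additive_subgroup G \<longleftrightarrow> 0 \<in> G \<and> (\<forall>a\<in>G. \<forall>b\<in>G. a + b \<in> G) \<and> (\<forall>a\<in>G. - a \<in> G)"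

text \<open>R = direct sum of the R_s, graded over the partial groupoid (S, mul, z),
inducing S: R_z = 0, R_s <> 0 for s <> z, z absorbing, R_s R_t in R_{st}
(which for st undefined, i.e. st = z, says R_s R_t = 0).\<close>
definition graded_inducing ::
  "('s \<Rightarrow> 's \<Rightarrow> 's) \<Rightarrow> 's \<Rightarrow> ('s \<Rightarrow> 'a::ring set) \<Rightarrow> bool" where
  "graded_inducing mul z Rg \<longleftrightarrow>
     (\<forall>s. additive_subgroup (Rg s)) \<and>
     (\<forall>x. \<exists>f. finite {s. f s \<noteq> 0} \<and> (\<forall>s. f s \<in> Rg s) \<and> x = sum f {s. f s \<noteq> 0}) \<and>
     (\<forall>f. finite {s. f s \<noteq> 0} \<and> (\<forall>s. f s \<in> Rg s) \<and> sum f {s. f s \<noteq> 0} = 0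
          \<longrightarrow> (\<forall>s. f s = 0)) \<and>
     (\<forall>s t x y. x \<in> Rg s \<longrightarrow> y \<in> Rg t \<longrightarrow> x * y \<in> Rg (mul s t)) \<and>
     (\<forall>s. mul z s = z \<and> mul s z = z) \<and>
     Rg z = {0} \<and>
     (\<forall>s. s \<noteq> z \<longrightarrow> Rg s \<noteq> {0})"

definition cancellative :: "('s \<Rightarrow> 's \<Rightarrow> 's) \<Rightarrow> 's \<Rightarrow> bool" where
  "cancellative mul z \<longleftrightarrow>
     (\<forall>s t u. (mul s u \<noteq> z \<and> mul s u = mul t u) \<longrightarrow> s = t) \<and>
     (\<forall>s t u. (mul u s \<noteq> z \<and> mul u s = mul u t) \<longrightarrow> s = t)"

definition idem :: "('s \<Rightarrow> 's \<Rightarrow> 's) \<Rightarrow> 's \<Rightarrow> bool" where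
  "idem mul e \<longleftrightarrow> mul e e = e"

definition LRI_at :: "('s \<Rightarrow> 's \<Rightarrow> 's) \<Rightarrow> 's \<Rightarrow> 's \<Rightarrow> bool" where
  "LRI_at mul s si \<longleftrightarrow> (\<exists>e f. idem mul e \<and> idem mul f \<and>
      mul e s = s \<and> mul s f = s \<and> mul f si = si \<and> mul si e = si \<and>
      mul s si = e \<and> mul si s = f)"

definition epsilon_strongly_graded ::
  "('s \<Rightarrow> 's \<Rightarrow> 's) \<Rightarrow> 's \<Rightarrow> ('s \<Rightarrow> 'a::ring set) \<Rightarrow> bool" where
  "epsilon_strongly_graded mul z Rg \<longleftrightarrow>
     cancellative mul z \<and>
     (\<exists>inv eps. (\<forall>s. LRI_at mul s (inv s)) \<and>
        (\<forall>s. eps s \<in> setprod (Rg s) (Rg (inv s)) \<and>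
             (\<forall>x\<in>Rg s. eps s * x = x \<and> x * eps (inv s) = x)))"

definition homogeneous :: "('s \<Rightarrow> 'a set) \<Rightarrow> 'a set" where
  "homogeneous Rg = (\<Union>s. Rg s)"

definition graded_vNr :: "('s \<Rightarrow> 'a::ring set) \<Rightarrow> bool" where
  "graded_vNr Rg \<longleftrightarrow> (\<forall>x\<in>homogeneous Rg. \<exists>y. x = x * y * x)"

definition vNr_ring :: "'a::ring set \<Rightarrow> bool" where
  "vNr_ring A \<longleftrightarrow> (\<forall>x\<in>A. \<exists>y\<in>A. x = x * y * x)"

end

theory Submission
  imports Defs
begin

text \<open>If \<open>R\<close> is graded regular and \<open>x \<in> R\<^sub>e\<close> with \<open>e\<close> idempotent, write \<open>x = x y x\<close> and split
\<open>y\<close> into homogeneous components \<open>y\<^sub>u\<close>. The summand \<open>x y\<^sub>u x\<close> has degree \<open>e u e\<close>, and by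
cancellativity \<open>e u e = e\<close> only for \<open>u = e\<close>; comparing components of degree \<open>e\<close> gives
\<open>x = x y\<^sub>e x\<close>.

Conversely, let \<open>x \<in> R\<^sub>s\<close>, let \<open>t\<close> be the inverse of \<open>s\<close> given by (LRI) and \<open>e = s t\<close>.
Then \<open>x R\<^sub>t \<subseteq> R\<^sub>e\<close> and \<open>R\<^sub>t R\<^sub>e \<subseteq> R\<^sub>t\<close>. Write \<open>\<epsilon>(t) = \<Sum> c\<^sub>i d\<^sub>i\<close> with \<open>c\<^sub>i \<in> R\<^sub>t\<close>.
Regularity of \<open>R\<^sub>e\<close>, applied to one \<open>x c\<^sub>i\<close> at a time, yields a single \<open>y \<in> R\<^sub>t\<close> with
\<open>x y x c\<^sub>i = x c\<^sub>i\<close> for all \<open>i\<close>, whence \<open>x y x = x y x \<epsilon>(t) = x \<epsilon>(t) = x\<close>.\<close>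

lemma additive_subgroup_add:
  "additive_subgroup G \<Longrightarrow> a \<in> G \<Longrightarrow> b \<in> G \<Longrightarrow> a + b \<in> G"
  unfolding additive_subgroup_def by blast

lemma additive_subgroup_diff:
  "additive_subgroup G \<Longrightarrow> a \<in> G \<Longrightarrow> b \<in> G \<Longrightarrow> a - b \<in> G"
  unfolding additive_subgroup_def by (metis diff_conv_add_uminus)

lemma additive_subgroup_sum:
  assumes "additive_subgroup G" and "\<And>t. t \<in> T \<Longrightarrow> h t \<in> G"
  shows "sum h T \<in> G"
  using assms(2)
  by (induction T rule: infinite_finite_induct) (use assms(1) in \<open>auto simp: additive_subgroup_def\<close>)

lemma additive_subgroup_add_span: "additive_subgroup (add_span X)"
  unfolding add_span_def additive_subgroup_def by blast

lemma add_span_superset: "X \<subseteq> add_span X"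
  unfolding add_span_def by blast

lemma add_span_least: "additive_subgroup G \<Longrightarrow> X \<subseteq> G \<Longrightarrow> add_span X \<subseteq> G"
  unfolding add_span_def additive_subgroup_def by blast

lemma add_span_mono: "X \<subseteq> Y \<Longrightarrow> add_span X \<subseteq> add_span Y"
  by (meson add_span_least additive_subgroup_add_span add_span_superset order_trans)

lemma add_span_finite:
  assumes "u \<in> add_span X"
  obtains F where "finite F" "F \<subseteq> X" "u \<in> add_span F"
proof -
  let ?G = "{u. \<exists>F. finite F \<and> F \<subseteq> X \<and> u \<in> add_span F}"
  have "additive_subgroup ?G"
    unfolding additive_subgroup_def
  proof (intro conjI ballI)
    show "0 \<in> ?G"
      using additive_subgroup_add_span[of "{}"] unfolding additive_subgroup_def by blast
  next
    fix a b assume "a \<in> ?G" "b \<in> ?G"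
    then obtain Fa Fb where Fa: "finite Fa" "Fa \<subseteq> X" "a \<in> add_span Fa"
      and Fb: "finite Fb" "Fb \<subseteq> X" "b \<in> add_span Fb"
      by blast
    have "a \<in> add_span (Fa \<union> Fb)" "b \<in> add_span (Fa \<union> Fb)"
      using Fa(3) Fb(3) add_span_mono[of Fa "Fa \<union> Fb"] add_span_mono[of Fb "Fa \<union> Fb"] by blast+
    then have "a + b \<in> add_span (Fa \<union> Fb)"
      using additive_subgroup_add_span unfolding additive_subgroup_def by blast
    with Fa Fb show "a + b \<in> ?G"
      by blast
  next
    fix a assume "a \<in> ?G"
    then obtain F where "finite F" "F \<subseteq> X" "a \<in> add_span F"
      by blast
    moreover from this(3) have "- a \<in> add_span F"
      using additive_subgroup_add_span unfolding additive_subgroup_def by blast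
    ultimately show "- a \<in> ?G"
      by blast
  qed
  moreover have "X \<subseteq> ?G"
  proof
    fix x assume "x \<in> X"
    then show "x \<in> ?G"
      using add_span_superset[of "{x}"] by blast
  qed
  ultimately have "add_span X \<subseteq> ?G"
    by (rule add_span_least)
  with assms that show ?thesis
    by blast
qed

lemma
  assumes "graded_inducing mul z Rg"
  shows graded_inducing_additive_subgroup: "additive_subgroup (Rg s)"
    and graded_inducing_mult: "x \<in> Rg s \<Longrightarrow> y \<in> Rg t \<Longrightarrow> x * y \<in> Rg (mul s t)"
    and graded_inducing_zero_degree: "Rg z = {0}"
  using assms unfolding graded_inducing_def by blast+

lemma graded_inducing_decomposition:
  assumes "graded_inducing mul z Rg"
  obtains f where "finite {s. f s \<noteq> 0}" "\<And>s. f s \<in> Rg s" "x = sum f {s. f s \<noteq> 0}"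
  using assms unfolding graded_inducing_def by blast

lemma graded_components_eq_0:
  assumes gr: "graded_inducing mul z Rg" and fin: "finite U"
    and deg: "\<And>u. u \<in> U \<Longrightarrow> g u \<in> Rg u" and sum0: "sum g U = 0" and u: "u \<in> U"
  shows "g u = 0"
proof -
  define g' where "g' s = (if s \<in> U then g s else 0)" for s
  have supp: "{s. g' s \<noteq> 0} \<subseteq> U"
    unfolding g'_def by auto
  have "sum g' {s. g' s \<noteq> 0} = sum g' U"
    by (rule sum.mono_neutral_left[OF fin supp]) auto
  with sum0 have "sum g' {s. g' s \<noteq> 0} = 0"
    by (simp add: g'_def)
  moreover have "\<forall>s. g' s \<in> Rg s"
    using deg graded_inducing_additive_subgroup[OF gr] unfolding g'_def additive_subgroup_def by auto
  ultimately have "\<forall>s. g' s = 0"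
    using gr finite_subset[OF supp fin] unfolding graded_inducing_def by blast
  with u show ?thesis
    unfolding g'_def by metis
qed

lemma graded_homogeneous_part:
  assumes gr: "graded_inducing mul z Rg" and fin: "finite S"
    and deg: "\<And>t. t \<in> S \<Longrightarrow> h t \<in> Rg (d t)" and e: "sum h S \<in> Rg e"
  shows "sum h {t \<in> S. d t = e} = sum h S"
proof -
  note sg = graded_inducing_additive_subgroup[OF gr]
  define U where "U = insert e (d ` S)"
  define g where "g u = sum h {t \<in> S. d t = u} - (if u = e then sum h S else 0)" for u
  have "finite U" "d ` S \<subseteq> U" "e \<in> U"
    using fin by (auto simp: U_def)
  then have "sum g U = sum h S - sum h S"
    by (simp add: g_def sum_subtractf sum.group[OF fin])
  moreover have "g u \<in> Rg u" for u
    unfolding g_def using e deg sg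
    by (intro additive_subgroup_diff additive_subgroup_sum) (auto simp: additive_subgroup_def)
  ultimately have "g e = 0"
    using graded_components_eq_0[OF gr \<open>finite U\<close> _ _ \<open>e \<in> U\<close>] by simp
  then show ?thesis
    by (simp add: g_def)
qed

lemma cancellative_idem_sandwich_eq:
  assumes canc: "cancellative mul z" and "idem mul e" and "e \<noteq> z"
    and sandwich: "mul (mul e t) e = e"
  shows "t = e"
proof -
  have ee: "mul e e = e"
    using assms(2) by (simp add: idem_def)
  have right: "mul s u \<noteq> z \<Longrightarrow> mul s u = mul s' u \<Longrightarrow> s = s'"
    and left: "mul u s \<noteq> z \<Longrightarrow> mul u s = mul u s' \<Longrightarrow> s = s'" for s s' u
    using canc unfolding cancellative_def by blast+
  have "mul e t = e"
    using right[of "mul e t" e e] sandwich ee \<open>e \<noteq> z\<close> by simp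
  then show ?thesis
    using left[of e t e] ee \<open>e \<noteq> z\<close> by simp
qed

lemma vNr_ring_idem_if_graded_vNr:
  assumes gr: "graded_inducing mul z Rg" and canc: "cancellative mul z"
    and reg: "graded_vNr Rg" and e: "idem mul e"
  shows "vNr_ring (Rg e)"
  unfolding vNr_ring_def
proof
  fix x assume x: "x \<in> Rg e"
  show "\<exists>y\<in>Rg e. x = x * y * x"
  proof (cases "e = z")
    case True
    with x have "x = 0"
      using graded_inducing_zero_degree[OF gr] by simp
    with x show ?thesis
      by auto
  next
    case False
    have "x \<in> homogeneous Rg"
      using x unfolding homogeneous_def by blast
    then obtain y where "x = x * y * x"
      using reg unfolding graded_vNr_def by blast
    moreover obtain f where fin: "finite {s. f s \<noteq> 0}" and f: "\<And>s. f s \<in> Rg s"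
      and "y = sum f {s. f s \<noteq> 0}"
      using graded_inducing_decomposition[OF gr] by blast
    ultimately have x_sum: "x = (\<Sum>t | f t \<noteq> 0. x * f t * x)"
      by (simp add: sum_distrib_left sum_distrib_right)
    have deg: "x * f t * x \<in> Rg (mul (mul e t) e)" for t
      by (intro graded_inducing_mult[OF gr] x f)
    have "{t. f t \<noteq> 0 \<and> mul (mul e t) e = e} = (if f e = 0 then {} else {e})"
      using cancellative_idem_sandwich_eq[OF canc e False] e by (auto simp: idem_def)
    moreover have "(\<Sum>t \<in> {t. f t \<noteq> 0 \<and> mul (mul e t) e = e}. x * f t * x) = x"
      using graded_homogeneous_part[OF gr fin deg] x x_sum by simp
    ultimately have "x = x * f e * x"
      by (simp split: if_splits)
    with f show ?thesis
      by blast
  qed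
qed

lemma vNr_ring_common_inner_inverse:
  fixes x :: "'a::ring"
  assumes Y: "additive_subgroup Y" and xY: "\<And>y. y \<in> Y \<Longrightarrow> x * y \<in> A"
    and YA: "\<And>y a. y \<in> Y \<Longrightarrow> a \<in> A \<Longrightarrow> y * a \<in> Y" and A: "vNr_ring A"
    and "finite C" "C \<subseteq> Y"
  shows "\<exists>y\<in>Y. \<forall>c\<in>C. x * y * (x * c) = x * c"
  using \<open>finite C\<close> \<open>C \<subseteq> Y\<close>
proof (induction C rule: finite_induct)
  case empty
  from Y show ?case
    unfolding additive_subgroup_def by blast
next
  case (insert c C)
  then obtain y where y: "y \<in> Y" and fix_C: "\<And>d. d \<in> C \<Longrightarrow> x * y * (x * d) = x * d"
    and c: "c \<in> Y"
    by auto
  define c' where "c' = c - y * (x * c)"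
  have "c' \<in> Y"
    unfolding c'_def using Y c y by (intro additive_subgroup_diff YA xY)
  then obtain w where w: "w \<in> A" and b_reg: "x * c' = x * c' * w * (x * c')"
    using A xY unfolding vNr_ring_def by blast
  define y' where "y' = y + c' * w - c' * w * (x * y)"
  have "y' \<in> Y"
    unfolding y'_def using Y y \<open>c' \<in> Y\<close> w
    by (intro additive_subgroup_diff additive_subgroup_add YA xY)
  \<comment> \<open>the correction term vanishes on \<open>C\<close>, and at \<open>c\<close> it is \<open>x c' w x c' = x c'\<close>\<close>
  have step: "x * y' * (x * d) = x * y * (x * d) + x * c' * w * (x * d - x * y * (x * d))" for d
    unfolding y'_def by (simp add: algebra_simps)
  have b: "x * c - x * y * (x * c) = x * c'"
    unfolding c'_def by (simp add: algebra_simps)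
  have "x * y' * (x * c) = x * y * (x * c) + x * c' * w * (x * c')"
    using step[of c] by (simp only: b)
  also have "\<dots> = x * c"
    using b b_reg by (simp add: algebra_simps)
  finally have "x * y' * (x * c) = x * c" .
  moreover have "x * y' * (x * d) = x * d" if "d \<in> C" for d
    using step[of d] fix_C[OF that] by simp
  ultimately show ?case
    using \<open>y' \<in> Y\<close> by blast
qed

lemma graded_vNr_if_vNr_ring_idem:
  assumes gr: "graded_inducing mul z Rg" and eps_gr: "epsilon_strongly_graded mul z Rg"
    and reg: "\<And>e. idem mul e \<Longrightarrow> vNr_ring (Rg e)"
  shows "graded_vNr Rg"
  unfolding graded_vNr_def
proof
  fix x assume "x \<in> homogeneous Rg"
  then obtain s where x: "x \<in> Rg s"
    unfolding homogeneous_def by blast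
  obtain inv eps where LRI: "\<And>s. LRI_at mul s (inv s)"
    and eps: "\<And>s. eps s \<in> setprod (Rg s) (Rg (inv s))"
    and eps_right: "\<And>s y. y \<in> Rg s \<Longrightarrow> y * eps (inv s) = y"
    using eps_gr unfolding epsilon_strongly_graded_def by blast
  let ?Y = "Rg (inv s)"
  obtain e where e: "idem mul e" and se: "mul s (inv s) = e" and es: "mul (inv s) e = inv s"
    using LRI[of s] unfolding LRI_at_def by blast
  have xY: "x * y \<in> Rg e" if "y \<in> ?Y" for y
    using graded_inducing_mult[OF gr x that] se by simp
  have YA: "y * a \<in> ?Y" if "y \<in> ?Y" "a \<in> Rg e" for y a
    using graded_inducing_mult[OF gr that] es by simp
  obtain F where "finite F" and "F \<subseteq> {c * d | c d. c \<in> ?Y \<and> d \<in> Rg (inv (inv s))}"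
    and eps_F: "eps (inv s) \<in> add_span F"
    using eps[of "inv s"] add_span_finite unfolding setprod_def by blast
  then have "\<forall>p\<in>F. \<exists>c. c \<in> ?Y \<and> (\<exists>d. p = c * d)"
    by blast
  then obtain c where c: "\<And>p. p \<in> F \<Longrightarrow> c p \<in> ?Y" and cd: "\<And>p. p \<in> F \<Longrightarrow> \<exists>d. p = c p * d"
    by (metis bchoice)
  obtain y where y: "\<And>p. p \<in> F \<Longrightarrow> x * y * (x * c p) = x * c p"
    using vNr_ring_common_inner_inverse[OF graded_inducing_additive_subgroup[OF gr] xY YA reg[OF e],
        of "c ` F"] \<open>finite F\<close> c by blast
  let ?Fix = "{u. x * y * (x * u) = x * u}"
  have "additive_subgroup ?Fix"
    unfolding additive_subgroup_def by (simp add: algebra_simps)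
  moreover have "F \<subseteq> ?Fix"
  proof
    fix p assume "p \<in> F"
    then obtain d where pd: "c p * d = p"
      using cd by metis
    have "x * y * (x * (c p * d)) = x * y * (x * c p) * d"
      by (simp add: mult.assoc)
    also have "\<dots> = x * (c p * d)"
      using y[OF \<open>p \<in> F\<close>] by (simp add: mult.assoc)
    finally show "p \<in> ?Fix"
      unfolding pd by simp
  qed
  ultimately have "eps (inv s) \<in> ?Fix"
    using add_span_least eps_F by blast
  then have "x * y * x = x"
    using eps_right[OF x] by simp
  then show "\<exists>y. x = x * y * x"
    by metis
qed

theorem corollary4p12:
  fixes mul :: "'s \<Rightarrow> 's \<Rightarrow> 's" and z :: 's and Rg :: "'s \<Rightarrow> 'a::ring set"
  assumes "graded_inducing mul z Rg"
    and "epsilon_strongly_graded mul z Rg"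
  shows "graded_vNr Rg \<longleftrightarrow> (\<forall>e. idem mul e \<longrightarrow> vNr_ring (Rg e))"
proof -
  have "cancellative mul z"
    using assms(2) unfolding epsilon_strongly_graded_def by blast
  then show ?thesis
    using vNr_ring_idem_if_graded_vNr[OF assms(1)] graded_vNr_if_vNr_ring_idem[OF assms] by blast
qed

end
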